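(* Let $s\ge1$, $d\ge0$ be integers. For every $n\times m$ $(0,1)$-matrix $M$ with ${\rm br}_s(M)\le d$, $$r(M)\cdot c(M)\le \binom{d}{\le s}2^d.$$
   Context: For a $(0,1)$-matrix $M$ of size $n\times m$, $M[i,j]$ denotes its $(i,j)$ entry and $[n]=\{1,\dots,n\}$. The $s$-binary rank ${\rm br}_s(M)$ is the minimal integer $d\ge 0$ such that there exist $d$ sets (rectangles) $I_k\times J_k$ with $I_k\subseteq[n]$, $J_k\subseteq[m]$, $k\in[d]$, with $M[i,j]=1$ for all $(i,j)\in I_k\times J_k$ and all $k$, and such that every $(i,j)$ with $M[i,j]=1$ lies in at least one and at most $s$ of the rectangles. $r(M)$ and $c(M)$ denote the numbers of distinct rows and distinct columns of $M$. $\binom{d}{\le s}=\sum_{i=0}^{s}\binom{d}{i}$. *)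

theory Defs
  imports Main "HOL-Library.FuncSet"
begin

text \<open>A (0,1)-matrix of size n x m is represented as M :: nat => nat => bool with
  entries M i j for i in {1..n}, j in {1..m} (True = 1); values outside are irrelevant.\<close>

definition is_s_cover ::
  "nat \<Rightarrow> nat \<Rightarrow> nat \<Rightarrow> (nat \<Rightarrow> nat \<Rightarrow> bool) \<Rightarrow> (nat set \<times> nat set) list \<Rightarrow> bool" where
  "is_s_cover s n m M R \<longleftrightarrow>
     (\<forall>k < length R. fst (R ! k) \<subseteq> {1..n} \<and> snd (R ! k) \<subseteq> {1..m}
        \<and> (\<forall>i \<in> fst (R ! k). \<forall>j \<in> snd (R ! k). M i j)) \<and>
     (\<forall>i \<in> {1..n}. \<forall>j \<in> {1..m}. M i j \<longrightarrow>
        (let c = card {k. k < length R \<and> i \<in> fst (R ! k) \<and> j \<in> snd (R ! k)}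
         in 1 \<le> c \<and> c \<le> s))"

definition br :: "nat \<Rightarrow> nat \<Rightarrow> nat \<Rightarrow> (nat \<Rightarrow> nat \<Rightarrow> bool) \<Rightarrow> nat" where
  "br s n m M = (LEAST d. \<exists>R. length R = d \<and> is_s_cover s n m M R)"

definition num_rows :: "nat \<Rightarrow> nat \<Rightarrow> (nat \<Rightarrow> nat \<Rightarrow> bool) \<Rightarrow> nat" where
  "num_rows n m M = card ((\<lambda>i. restrict (M i) {1..m}) ` {1..n})"

definition num_cols :: "nat \<Rightarrow> nat \<Rightarrow> (nat \<Rightarrow> nat \<Rightarrow> bool) \<Rightarrow> nat" where
  "num_cols n m M = card ((\<lambda>j. restrict (\<lambda>i. M i j) {1..n}) ` {1..m})"

definition binom_le :: "nat \<Rightarrow> nat \<Rightarrow> nat" where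
  "binom_le d s = (\<Sum>i\<le>s. d choose i)"

end

theory Submission
  imports Defs
begin

text \<open>Label each row (column) by the set of rectangles of a minimal s-cover containing it. An
  entry is 1 exactly when the two labels meet, and then they meet in at most s rectangles; so
  distinct rows have distinct labels, and the labels form two families A, B of subsets of a
  d-element set with |X \<inter> Y| \<le> s throughout. For such families |A| |B| \<le> binom_le d s * 2^d,
  by induction on d: deleting an element x, |A| is the number of traces X - {x} plus the number
  of X with both X and X \<union> {x} in A; the traces are again s-intersecting, these pairs are
  (s-1)-intersecting, and (a + a') (b + b') \<le> 2ab + 2a'b' for a' \<le> a, b' \<le> b together with
  Pascal's rule for binom_le closes the induction.\<close>

lemma binom_le_0_left [simp]: "binom_le 0 s = 1"
  unfolding binom_le_def by (induction s) auto

lemma binom_le_0_right [simp]: "binom_le d 0 = 1"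
  by (simp add: binom_le_def)

lemma binom_le_Suc_Suc:
  "binom_le (Suc d) (Suc s) = binom_le d (Suc s) + binom_le d s"
proof (induction s)
  case 0
  then show ?case by (simp add: binom_le_def)
next
  case (Suc s)
  have "binom_le (Suc d) (Suc (Suc s)) = binom_le (Suc d) (Suc s) + (Suc d choose Suc (Suc s))"
    by (simp add: binom_le_def)
  also have "\<dots> = binom_le d (Suc s) + binom_le d s + (d choose Suc s) + (d choose Suc (Suc s))"
    using Suc by simp
  also have "\<dots> = binom_le d (Suc (Suc s)) + binom_le d (Suc s)"
    by (simp add: binom_le_def)
  finally show ?case .
qed

lemma add_mult_add_le_double_products:
  fixes x u y v :: nat
  assumes "u \<le> x" "v \<le> y"
  shows "(x + u) * (y + v) \<le> 2 * (x * y) + 2 * (u * v)"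
proof -
  have "int ((x + u) * (y + v)) + (int x - int u) * (int y - int v) = int (2 * (x * y) + 2 * (u * v))"
    by (simp add: algebra_simps)
  moreover have "(int x - int u) * (int y - int v) \<ge> 0"
    using assms by simp
  ultimately show ?thesis by linarith
qed

definition deletion_family :: "'a \<Rightarrow> 'a set set \<Rightarrow> 'a set set" where
  "deletion_family x A = (\<lambda>X. X - {x}) ` A"

definition pair_family :: "'a \<Rightarrow> 'a set set \<Rightarrow> 'a set set" where
  "pair_family x A = {X \<in> A. x \<notin> X \<and> insert x X \<in> A}"

lemma card_eq_card_deletion_family_add_card_pair_family:
  assumes "finite A"
  shows "card A = card (deletion_family x A) + card (pair_family x A)"
proof -
  define A0 where "A0 = {X \<in> A. x \<notin> X}"
  define A1 where "A1 = {X \<in> A. x \<in> X}"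
  have "A = A0 \<union> A1"
    unfolding A0_def A1_def by blast
  then have "card A = card A0 + card A1"
    using assms card_Un_disjoint[of A0 A1] by (auto simp: A0_def A1_def)
  also have "card A1 = card ((\<lambda>X. X - {x}) ` A1)"
    by (rule card_image[symmetric], rule inj_onI) (metis A1_def insert_Diff mem_Collect_eq)
  also have "card A0 + \<dots> = card (A0 \<union> (\<lambda>X. X - {x}) ` A1) + card (A0 \<inter> (\<lambda>X. X - {x}) ` A1)"
    by (rule card_Un_Int) (use assms in \<open>simp_all add: A0_def A1_def\<close>)
  also have "A0 \<union> (\<lambda>X. X - {x}) ` A1 = deletion_family x A"
    unfolding deletion_family_def \<open>A = A0 \<union> A1\<close> image_Un by (auto simp: A0_def)
  also have "A0 \<inter> (\<lambda>X. X - {x}) ` A1 = pair_family x A"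
    by (auto simp: A0_def A1_def pair_family_def insert_absorb image_iff)
  finally show ?thesis .
qed

lemma pair_family_subset_deletion_family: "pair_family x A \<subseteq> deletion_family x A"
  unfolding pair_family_def deletion_family_def by (force simp: image_iff)

lemma deletion_family_subset_Pow:
  "A \<subseteq> Pow (insert x U) \<Longrightarrow> deletion_family x A \<subseteq> Pow U"
  unfolding deletion_family_def by blast

lemma deletion_family_cross_intersection_le:
  assumes "\<forall>X\<in>A. finite X" and "\<forall>X\<in>A. \<forall>Y\<in>B. card (X \<inter> Y) \<le> s"
  shows "\<forall>X\<in>deletion_family x A. \<forall>Y\<in>deletion_family x B. card (X \<inter> Y) \<le> s"
proof (intro ballI)
  fix X Y assume "X \<in> deletion_family x A" "Y \<in> deletion_family x B"
  then obtain X' Y' where "X' \<in> A" "Y' \<in> B" "X = X' - {x}" "Y = Y' - {x}"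
    unfolding deletion_family_def by blast
  then have "card (X \<inter> Y) \<le> card (X' \<inter> Y')"
    using assms(1) by (intro card_mono) auto
  also have "\<dots> \<le> s"
    using assms(2) \<open>X' \<in> A\<close> \<open>Y' \<in> B\<close> by blast
  finally show "card (X \<inter> Y) \<le> s" .
qed

lemma pair_family_cross_intersection_less:
  assumes "\<forall>X\<in>A. finite X" and "\<forall>X\<in>A. \<forall>Y\<in>B. card (X \<inter> Y) \<le> s"
  shows "\<forall>X\<in>pair_family x A. \<forall>Y\<in>pair_family x B. card (X \<inter> Y) < s"
proof (intro ballI)
  fix X Y assume X: "X \<in> pair_family x A" and Y: "Y \<in> pair_family x B"
  then have "finite (X \<inter> Y)" "x \<notin> X \<inter> Y"
    using assms(1) by (auto simp: pair_family_def)
  then have "card (X \<inter> Y) < card (insert x X \<inter> insert x Y)"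
    by simp
  also have "\<dots> \<le> s"
    using assms(2) X Y unfolding pair_family_def by blast
  finally show "card (X \<inter> Y) < s" .
qed

lemma cross_intersecting_families_card_le:
  fixes A B :: "nat set set"
  assumes "A \<subseteq> Pow {..<d}" "B \<subseteq> Pow {..<d}"
    and "\<forall>X\<in>A. \<forall>Y\<in>B. card (X \<inter> Y) \<le> s"
  shows "card A * card B \<le> binom_le d s * 2 ^ d"
  using assms
proof (induction d arbitrary: s A B)
  case 0
  then have "A \<subseteq> {{}}" "B \<subseteq> {{}}" by auto
  then have "card A \<le> 1" "card B \<le> 1"
    using card_mono[of "{{}}" A] card_mono[of "{{}}" B] by simp_all
  then have "card A * card B \<le> 1"
    using mult_le_mono by fastforce
  then show ?case by simp
next
  case (Suc d)
  have fin: "finite A" "finite B" "\<forall>X\<in>A. finite X"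
    using Suc.prems(1,2) by (auto intro: finite_subset)
  have sub: "deletion_family d A \<subseteq> Pow {..<d}" "deletion_family d B \<subseteq> Pow {..<d}"
    "pair_family d A \<subseteq> Pow {..<d}" "pair_family d B \<subseteq> Pow {..<d}"
    using deletion_family_subset_Pow[of _ d] pair_family_subset_deletion_family[of d]
      Suc.prems(1,2) unfolding lessThan_Suc by blast+
  have deletion_bound:
    "card (deletion_family d A) * card (deletion_family d B) \<le> binom_le d s * 2 ^ d"
    using Suc.IH[OF sub(1,2)] deletion_family_cross_intersection_le[OF fin(3) Suc.prems(3)] .
  have pairs_Int: "\<forall>X\<in>pair_family d A. \<forall>Y\<in>pair_family d B. card (X \<inter> Y) < s"
    using pair_family_cross_intersection_less[OF fin(3) Suc.prems(3)] .
  have "card (pair_family d F) \<le> card (deletion_family d F)" if "finite F" for F :: "nat set set"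
    using that by (intro card_mono pair_family_subset_deletion_family) (simp add: deletion_family_def)
  then have "card A * card B
      \<le> 2 * (card (deletion_family d A) * card (deletion_family d B))
       + 2 * (card (pair_family d A) * card (pair_family d B))"
    unfolding card_eq_card_deletion_family_add_card_pair_family[where x = d, OF fin(1)]
      card_eq_card_deletion_family_add_card_pair_family[where x = d, OF fin(2)]
    using fin(1,2) by (intro add_mult_add_le_double_products)
  also have "\<dots> \<le> binom_le (Suc d) s * 2 ^ Suc d"
  proof (cases s)
    case 0
    then have "pair_family d A = {} \<or> pair_family d B = {}"
      using pairs_Int by fastforce
    then show ?thesis
      using deletion_bound 0 by auto
  next
    case (Suc s')
    then have "card (pair_family d A) * card (pair_family d B) \<le> binom_le d s' * 2 ^ d"
      using Suc.IH[OF sub(3,4)] pairs_Int by (simp add: less_Suc_eq_le)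
    then show ?thesis
      using deletion_bound Suc by (simp add: binom_le_Suc_Suc algebra_simps)
  qed
  finally show ?case .
qed

lemma singleton_s_cover_exists:
  assumes "s \<ge> 1"
  shows "\<exists>R. is_s_cover s n m M R"
proof -
  define L where "L = filter (\<lambda>(i, j). M i j) (List.product [1..<Suc n] [1..<Suc m])"
  define R where "R = map (\<lambda>(i, j). ({i}, {j})) L"
  have "distinct L"
    unfolding L_def by (simp add: distinct_product)
  have set_L: "set L = {(i, j). i \<in> {1..n} \<and> j \<in> {1..m} \<and> M i j}"
    unfolding L_def by auto
  have "{k. k < length R \<and> i \<in> fst (R ! k) \<and> j \<in> snd (R ! k)} = {k. k < length L \<and> L ! k = (i, j)}"
    for i j
    unfolding R_def by (auto split: prod.splits)
  moreover have "card {k. k < length L \<and> L ! k = (i, j)} = 1"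
    if "i \<in> {1..n}" "j \<in> {1..m}" "M i j" for i j
  proof -
    have "\<exists>!k. k < length L \<and> L ! k = (i, j)"
      using distinct_Ex1[OF \<open>distinct L\<close>, of "(i, j)"] that set_L by auto
    then obtain k where "{k'. k' < length L \<and> L ! k' = (i, j)} = {k}"
      by blast
    then show ?thesis by simp
  qed
  moreover have "\<forall>k < length R. fst (R ! k) \<subseteq> {1..n} \<and> snd (R ! k) \<subseteq> {1..m}
      \<and> (\<forall>i \<in> fst (R ! k). \<forall>j \<in> snd (R ! k). M i j)"
  proof (intro allI impI)
    fix k assume "k < length R"
    then have "L ! k \<in> set L"
      by (simp add: R_def)
    then show "fst (R ! k) \<subseteq> {1..n} \<and> snd (R ! k) \<subseteq> {1..m}
        \<and> (\<forall>i \<in> fst (R ! k). \<forall>j \<in> snd (R ! k). M i j)"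
      using \<open>k < length R\<close> unfolding set_L R_def by (auto split: prod.splits)
  qed
  ultimately have "is_s_cover s n m M R"
    using assms unfolding is_s_cover_def Let_def by simp
  then show ?thesis ..
qed

definition row_rects :: "(nat set \<times> nat set) list \<Rightarrow> nat \<Rightarrow> nat set" where
  "row_rects R i = {k. k < length R \<and> i \<in> fst (R ! k)}"

definition col_rects :: "(nat set \<times> nat set) list \<Rightarrow> nat \<Rightarrow> nat set" where
  "col_rects R j = {k. k < length R \<and> j \<in> snd (R ! k)}"

lemma s_cover_entry_iff:
  assumes cover: "is_s_cover s n m M R" and "i \<in> {1..n}" "j \<in> {1..m}"
  shows "M i j \<longleftrightarrow> row_rects R i \<inter> col_rects R j \<noteq> {}"
    and "card (row_rects R i \<inter> col_rects R j) \<le> s"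
proof -
  have Int_eq: "row_rects R i \<inter> col_rects R j = {k. k < length R \<and> i \<in> fst (R ! k) \<and> j \<in> snd (R ! k)}"
    by (auto simp: row_rects_def col_rects_def)
  have count: "1 \<le> card (row_rects R i \<inter> col_rects R j) \<and> card (row_rects R i \<inter> col_rects R j) \<le> s"
    if "M i j"
    using cover that assms(2,3) unfolding Int_eq is_s_cover_def Let_def by blast
  have rect: "M i j" if "k < length R" "i \<in> fst (R ! k)" "j \<in> snd (R ! k)" for k
    using cover that unfolding is_s_cover_def by blast
  show iff: "M i j \<longleftrightarrow> row_rects R i \<inter> col_rects R j \<noteq> {}"
  proof
    assume "M i j"
    then show "row_rects R i \<inter> col_rects R j \<noteq> {}"
      using count by auto
  next
    assume "row_rects R i \<inter> col_rects R j \<noteq> {}"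
    then show "M i j"
      unfolding Int_eq using rect by blast
  qed
  show "card (row_rects R i \<inter> col_rects R j) \<le> s"
    using count iff by (cases "M i j") auto
qed

lemma s_cover_num_rows_le:
  assumes "is_s_cover s n m M R"
  shows "num_rows n m M \<le> card (row_rects R ` {1..n})"
proof -
  define row_of where "row_of X = restrict (\<lambda>j. X \<inter> col_rects R j \<noteq> {}) {1..m}" for X
  have "(\<lambda>i. restrict (M i) {1..m}) ` {1..n} = row_of ` row_rects R ` {1..n}"
    unfolding image_image row_of_def
    by (rule image_cong) (auto simp: restrict_def s_cover_entry_iff(1)[OF assms])
  then show ?thesis
    unfolding num_rows_def by (simp add: card_image_le)
qed

lemma s_cover_num_cols_le:
  assumes "is_s_cover s n m M R"
  shows "num_cols n m M \<le> card (col_rects R ` {1..m})"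
proof -
  define col_of where "col_of Y = restrict (\<lambda>i. row_rects R i \<inter> Y \<noteq> {}) {1..n}" for Y
  have "(\<lambda>j. restrict (\<lambda>i. M i j) {1..n}) ` {1..m} = col_of ` col_rects R ` {1..m}"
    unfolding image_image col_of_def
    by (rule image_cong) (auto simp: restrict_def s_cover_entry_iff(1)[OF assms])
  then show ?thesis
    unfolding num_cols_def by (simp add: card_image_le)
qed

theorem lemma4:
  fixes s d n m :: nat and M :: "nat \<Rightarrow> nat \<Rightarrow> bool"
  assumes "s \<ge> 1"
    and "br s n m M \<le> d"
  shows "num_rows n m M * num_cols n m M \<le> binom_le d s * 2 ^ d"
proof -
  obtain R where "length R = br s n m M" and cover: "is_s_cover s n m M R"
    using LeastI_ex[of "\<lambda>d. \<exists>R. length R = d \<and> is_s_cover s n m M R"]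
      singleton_s_cover_exists[OF assms(1)] unfolding br_def by blast
  then have "length R \<le> d"
    using assms(2) by simp
  then have "row_rects R ` {1..n} \<subseteq> Pow {..<d}" "col_rects R ` {1..m} \<subseteq> Pow {..<d}"
    by (auto simp: row_rects_def col_rects_def)
  moreover have "\<forall>X \<in> row_rects R ` {1..n}. \<forall>Y \<in> col_rects R ` {1..m}. card (X \<inter> Y) \<le> s"
    using s_cover_entry_iff(2)[OF cover] by blast
  ultimately have "card (row_rects R ` {1..n}) * card (col_rects R ` {1..m}) \<le> binom_le d s * 2 ^ d"
    by (rule cross_intersecting_families_card_le)
  moreover have "num_rows n m M * num_cols n m M
      \<le> card (row_rects R ` {1..n}) * card (col_rects R ` {1..m})"
    using s_cover_num_rows_le[OF cover] s_cover_num_cols_le[OF cover] by (rule mult_le_mono)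
  ultimately show ?thesis by simp
qed

end
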